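(* Let $pu$, $uv$, and $vq$ be three edges of a Euclidean minimum spanning tree of a finite point set in the plane such that $p$ and $q$ lie on the same side of the line through $u$ and $v$. Let $\alpha=\angle puv$ and $\gamma=\angle uvq$ denote the convex angles at $u$ and $v$, respectively. If $\alpha+\gamma\leqslant 210^\circ$, then $|pq|\leqslant\sqrt{3}\cdot\max\{|pu|,|uv|,|vq|\}$.
   Context: $|xy|$ denotes the Euclidean distance between points $x$ and $y$; angles are measured in degrees. *)

theory Defs
  imports "HOL-Analysis.Analysis"
begin

type_synonym pt = "real^2"

definition adj :: "pt set set \<Rightarrow> pt \<Rightarrow> pt \<Rightarrow> bool" where
  "adj E x y \<longleftrightarrow> {x, y} \<in> E"

definition graph_connected_on :: "pt set \<Rightarrow> pt set set \<Rightarrow> bool" where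
  "graph_connected_on P E \<longleftrightarrow> (\<forall>x\<in>P. \<forall>y\<in>P. (adj E)\<^sup>*\<^sup>* x y)"

definition has_cycle :: "pt set set \<Rightarrow> bool" where
  "has_cycle E \<longleftrightarrow> (\<exists>vs. length vs \<ge> 3 \<and> distinct vs \<and>
      (\<forall>i < length vs. {vs ! i, vs ! ((i + 1) mod length vs)} \<in> E))"

definition is_spanning_tree :: "pt set \<Rightarrow> pt set set \<Rightarrow> bool" where
  "is_spanning_tree P E \<longleftrightarrow>
     E \<subseteq> {{a, b} | a b. a \<in> P \<and> b \<in> P \<and> a \<noteq> b} \<and>
     graph_connected_on P E \<and> \<not> has_cycle E"

definition edge_len :: "pt set \<Rightarrow> real" where
  "edge_len e = (SOME d. \<exists>a b. e = {a, b} \<and> d = dist a b)"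

definition tree_weight :: "pt set set \<Rightarrow> real" where
  "tree_weight E = (\<Sum>e\<in>E. edge_len e)"

definition is_EMST :: "pt set \<Rightarrow> pt set set \<Rightarrow> bool" where
  "is_EMST P T \<longleftrightarrow> is_spanning_tree P T \<and>
     (\<forall>T'. is_spanning_tree P T' \<longrightarrow> tree_weight T \<le> tree_weight T')"

definition cross2 :: "pt \<Rightarrow> pt \<Rightarrow> real" where
  "cross2 a b = a $ 1 * b $ 2 - a $ 2 * b $ 1"

definition same_side :: "pt \<Rightarrow> pt \<Rightarrow> pt \<Rightarrow> pt \<Rightarrow> bool" where
  "same_side u v p q \<longleftrightarrow> cross2 (v - u) (p - u) * cross2 (v - u) (q - u) > 0"

definition angle_deg :: "pt \<Rightarrow> pt \<Rightarrow> pt \<Rightarrow> real" where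
  "angle_deg a b c = arccos (((a - b) \<bullet> (c - b)) / (norm (a - b) * norm (c - b))) * 180 / pi"

end

theory Submission
  imports Defs
begin

text \<open>Replacing a tree edge \<open>ab\<close> by \<open>ac\<close>, where \<open>bc\<close> is another tree edge, leaves a connected
  graph, which still contains a spanning tree; minimality of an EMST therefore gives
  \<open>|ab| \<le> |ac|\<close>. Applied to the path \<open>p u v q\<close> this yields \<open>|pu|, |uv| \<le> |pv|\<close> and
  \<open>|uv|, |vq| \<le> |uq|\<close>, which force both angles at \<open>u\<close> and \<open>v\<close> to be at least 60 degrees.
  In coordinates with \<open>u\<close> at the origin and \<open>v\<close> on the positive x-axis, \<open>|pq|\<^sup>2\<close> is a convex
  quadratic along every line in the edge lengths, so it suffices to bound it at the corners of the
  region cut out by these inequalities; the angle condition enters through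
  \<open>\<alpha> \<le> 210 - \<gamma>\<close>, i.e. \<open>cos \<alpha> \<ge> cos (210 - \<gamma>)\<close>. The corners are handled by a case distinction
  on whether the angles are acute or obtuse.\<close>

lemma edge_len_doubleton [simp]: "edge_len {x, y} = dist x y"
  unfolding edge_len_def
proof (rule some_equality)
  show "\<exists>a b. {x, y} = {a, b} \<and> dist x y = dist a b" by blast
next
  fix d assume "\<exists>a b. {x, y} = {a, b} \<and> d = dist a b"
  then show "d = dist x y" by (auto simp: doubleton_eq_iff dist_commute)
qed

definition edges_on :: "pt set \<Rightarrow> pt set set" where
  "edges_on P = {{a, b} | a b. a \<in> P \<and> b \<in> P \<and> a \<noteq> b}"

lemma is_spanning_tree_iff:
  "is_spanning_tree P E \<longleftrightarrow> E \<subseteq> edges_on P \<and> graph_connected_on P E \<and> \<not> has_cycle E"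
  by (simp add: is_spanning_tree_def edges_on_def)

lemma finite_edges_on: "finite P \<Longrightarrow> finite (edges_on P)"
  by (rule finite_subset[of _ "Pow P"]) (auto simp: edges_on_def)

lemma edges_on_memberD: "{a, b} \<in> edges_on P \<Longrightarrow> a \<in> P \<and> b \<in> P"
  unfolding edges_on_def by (auto simp: doubleton_eq_iff)

lemma adj_rtranclp_sym:
  assumes "(adj E)\<^sup>*\<^sup>* x y"
  shows "(adj E)\<^sup>*\<^sup>* y x"
proof -
  have "symp (adj E)" by (auto simp: symp_def adj_def insert_commute)
  then show ?thesis using assms by (metis symp_rtranclp sympD)
qed

lemma graph_connected_on_exchange:
  assumes conn: "graph_connected_on P E"
    and path: "(adj E')\<^sup>*\<^sup>* x y"
    and kept: "\<And>e. e \<in> E \<Longrightarrow> e \<noteq> {x, y} \<Longrightarrow> e \<in> E'"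
  shows "graph_connected_on P E'"
proof -
  have "(adj E')\<^sup>*\<^sup>* a b" if "adj E a b" for a b
  proof (cases "{a, b} = {x, y}")
    case True
    then have "(a, b) = (x, y) \<or> (a, b) = (y, x)" by (auto simp: doubleton_eq_iff)
    then show ?thesis using path adj_rtranclp_sym by blast
  next
    case False
    then have "adj E' a b" using that kept by (simp add: adj_def)
    then show ?thesis by (rule r_into_rtranclp)
  qed
  then have "(adj E)\<^sup>*\<^sup>* \<le> (adj E')\<^sup>*\<^sup>*"
    using rtranclp_mono[of "adj E" "(adj E')\<^sup>*\<^sup>*"] by auto
  then show ?thesis using conn unfolding graph_connected_on_def by blast
qed

lemma has_cycle_redundant_edge:
  assumes "has_cycle E"
  obtains x y where "{x, y} \<in> E" and "(adj (E - {{x, y}}))\<^sup>*\<^sup>* x y"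
proof -
  obtain vs where len: "3 \<le> length vs" and dist: "distinct vs"
    and cyc: "\<forall>i < length vs. {vs ! i, vs ! ((i + 1) mod length vs)} \<in> E"
    using assms unfolding has_cycle_def by blast
  define n where "n = length vs"
  define E' where "E' = E - {{vs ! 1, vs ! 0}}"
  have "0 < n" "1 < n" using len unfolding n_def by linarith+
  have idx: "vs ! k = vs ! l \<longleftrightarrow> k = l" if "k < n" "l < n" for k l
    using dist that by (simp add: n_def nth_eq_iff_index_eq)
  have edge: "adj E' (vs ! i) (vs ! (Suc i mod n))" if "1 \<le> i" "i < n" for i
  proof -
    have in_E: "{vs ! i, vs ! (Suc i mod n)} \<in> E" using cyc that by (simp add: n_def)
    have "Suc i mod n \<noteq> 0 \<or> i \<noteq> 1" using len by (auto simp: n_def dest: dvd_imp_le)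
    moreover have "Suc i mod n < n" using \<open>0 < n\<close> by simp
    ultimately have "{vs ! i, vs ! (Suc i mod n)} \<noteq> {vs ! 1, vs ! 0}"
      using that \<open>1 < n\<close> idx[of i 1] idx[of i 0] idx[of "Suc i mod n" 0]
      by (auto simp: doubleton_eq_iff)
    then show ?thesis using in_E by (simp add: E'_def adj_def)
  qed
  have path: "k \<le> n \<Longrightarrow> (adj E')\<^sup>*\<^sup>* (vs ! 1) (vs ! (k mod n))" if "1 \<le> k" for k
    using that
  proof (induction k rule: nat_induct_at_least)
    case base
    then show ?case using len by (simp add: n_def)
  next
    case (Suc k)
    then have "adj E' (vs ! (k mod n)) (vs ! (Suc k mod n))" using edge[of k] by simp
    with Suc show ?case by (simp add: rtranclp.rtrancl_into_rtrancl)
  qed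
  show thesis
  proof
    show "{vs ! 1, vs ! 0} \<in> E"
      using cyc[rule_format, of 0] \<open>0 < n\<close> \<open>1 < n\<close> by (simp add: n_def insert_commute)
    show "(adj (E - {{vs ! 1, vs ! 0}}))\<^sup>*\<^sup>* (vs ! 1) (vs ! 0)"
      using path[of n] len by (simp add: n_def E'_def)
  qed
qed

lemma connected_has_spanning_tree:
  assumes "finite P" and "E \<subseteq> edges_on P" and "graph_connected_on P E"
  shows "\<exists>E' \<subseteq> E. is_spanning_tree P E'"
  using assms(2,3)
proof (induction "card E" arbitrary: E rule: less_induct)
  case less
  show ?case
  proof (cases "has_cycle E")
    case False
    then show ?thesis using less.prems by (auto simp: is_spanning_tree_iff)
  next
    case True
    then obtain x y where xy: "{x, y} \<in> E" and path: "(adj (E - {{x, y}}))\<^sup>*\<^sup>* x y"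
      by (rule has_cycle_redundant_edge)
    have "finite E" using less.prems(1) finite_edges_on[OF assms(1)] by (rule finite_subset)
    then have "card (E - {{x, y}}) < card E" using xy by (rule card_Diff1_less)
    moreover have "graph_connected_on P (E - {{x, y}})"
      using less.prems(2) path by (rule graph_connected_on_exchange) blast
    moreover have "E - {{x, y}} \<subseteq> edges_on P" using less.prems(1) by blast
    ultimately obtain E' where "E' \<subseteq> E - {{x, y}}" "is_spanning_tree P E'"
      using less.hyps by blast
    then show ?thesis by blast
  qed
qed

lemma is_EMST_adjacent_edge_le:
  assumes fin: "finite S" and emst: "is_EMST S T"
    and ab: "{a, b} \<in> T" and bc: "{b, c} \<in> T" and "a \<noteq> c"
  shows "dist a b \<le> dist a c"
proof -
  have tree: "is_spanning_tree S T"
    and min: "\<And>T'. is_spanning_tree S T' \<Longrightarrow> tree_weight T \<le> tree_weight T'"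
    using emst unfolding is_EMST_def by auto
  have T_edges: "T \<subseteq> edges_on S" and conn: "graph_connected_on S T"
    using tree by (simp_all add: is_spanning_tree_iff)
  then have "a \<in> S" "c \<in> S" using ab bc edges_on_memberD by blast+
  have "finite T" using T_edges finite_edges_on[OF fin] by (rule finite_subset)
  define T' where "T' = insert {a, c} (T - {{a, b}})"
  have T'_edges: "T' \<subseteq> edges_on S"
    using T_edges \<open>a \<in> S\<close> \<open>c \<in> S\<close> \<open>a \<noteq> c\<close> by (auto simp: T'_def edges_on_def)
  have "{b, c} \<noteq> {a, b}" using \<open>a \<noteq> c\<close> by (auto simp: doubleton_eq_iff)
  then have "adj T' a c" "adj T' c b" using bc by (auto simp: T'_def adj_def insert_commute)
  then have "(adj T')\<^sup>*\<^sup>* a b" by (meson r_into_rtranclp rtranclp.rtrancl_into_rtrancl)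
  then have "graph_connected_on S T'"
    by (rule graph_connected_on_exchange[OF conn]) (auto simp: T'_def)
  then obtain T'' where "T'' \<subseteq> T'" "is_spanning_tree S T''"
    using connected_has_spanning_tree[OF fin T'_edges] by blast
  have "dist a b + tree_weight (T - {{a, b}}) = tree_weight T"
    unfolding tree_weight_def using sum.remove[OF \<open>finite T\<close> ab, of edge_len] by simp
  also have "\<dots> \<le> tree_weight T''" by (rule min) fact
  also have "\<dots> \<le> tree_weight T'"
    unfolding tree_weight_def using \<open>finite T\<close> \<open>T'' \<subseteq> T'\<close> T'_edges
    by (intro sum_mono2) (auto simp: T'_def edges_on_def)
  also have "\<dots> \<le> dist a c + tree_weight (T - {{a, b}})"
    using \<open>finite T\<close> by (simp add: T'_def tree_weight_def sum.insert_if)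
  finally show ?thesis by simp
qed

lemma sum_sq_affine_le_between:
  fixes P0 P1 Q0 Q1 K l h t :: real
  assumes "l \<le> t" "t \<le> h"
    and "(P0 + l * P1)^2 + (Q0 + l * Q1)^2 \<le> K"
    and "(P0 + h * P1)^2 + (Q0 + h * Q1)^2 \<le> K"
  shows "(P0 + t * P1)^2 + (Q0 + t * Q1)^2 \<le> K"
proof (cases "l = h")
  case True
  then show ?thesis using assms by auto
next
  case False
  then have "0 < h - l" using assms by auto
  define f where "f s = (P0 + s * P1)^2 + (Q0 + s * Q1)^2" for s
  have interpolate: "(h - l) * f t
      = (h - t) * f l + (t - l) * f h - (P1^2 + Q1^2) * (t - l) * (h - t) * (h - l)"
    unfolding f_def by (simp add: algebra_simps power2_eq_square)
  have "0 \<le> (P1^2 + Q1^2) * (t - l) * (h - t) * (h - l)"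
    using assms \<open>0 < h - l\<close> by simp
  moreover have "(h - t) * f l \<le> (h - t) * K" "(t - l) * f h \<le> (t - l) * K"
    using assms by (simp_all add: f_def mult_left_mono)
  ultimately have "(h - l) * f t \<le> (h - l) * K"
    unfolding interpolate by (simp add: algebra_simps)
  then show ?thesis using \<open>0 < h - l\<close> by (simp add: f_def)
qed

lemma sqrt3_bounds: "1 \<le> sqrt (3::real)" "sqrt (3::real) \<le> 2"
  by (simp_all add: real_le_rsqrt real_sqrt_le_iff')

lemma le_half_of_mutual_bounds:
  fixes a d k :: real
  assumes "0 < a" "0 < d" "2 * a * k \<le> d" "2 * d * k \<le> a"
  shows "k \<le> 1/2"
proof (cases "k \<le> 0")
  case False
  have "(2 * a * k) * (2 * d * k) \<le> d * a" using assms False by (intro mult_mono) auto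
  then have "(a * d) * (4 * k^2) \<le> (a * d) * 1" by (simp add: power2_eq_square algebra_simps)
  then have "k^2 \<le> (1/2)^2" using assms by (simp add: power2_eq_square)
  then show ?thesis by (rule power2_le_imp_le) simp
qed simp

lemma sqrt3_half_le_of_unit:
  fixes k m :: real
  assumes "k^2 + m^2 = 1" "0 \<le> m" "\<bar>k\<bar> \<le> 1/2"
  shows "sqrt 3 / 2 \<le> m"
proof -
  have "k^2 \<le> (1/2)^2" using assms(3) by (metis abs_ge_zero power2_abs power_mono)
  then have "(sqrt 3 / 2)^2 \<le> m^2" using assms(1) by (simp add: power_divide)
  then show ?thesis using assms(2) by (rule power2_le_imp_le)
qed

text \<open>The conclusion says \<open>x \<ge> cos (7\<pi>/6 - arccos y)\<close>.\<close>
lemma cos_bound_of_arccos_add_le: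
  fixes x y :: real
  assumes "-1 \<le> x" "x \<le> 1" "-1 \<le> y" "y \<le> 1/2"
    and "arccos x + arccos y \<le> 7 * pi/6"
  shows "0 \<le> 2 * x + sqrt 3 * y + sqrt (1 - y^2)"
proof -
  have "pi/3 \<le> arccos y" using arccos_le_arccos[of y "1/2"] assms by simp
  moreover have "arccos y \<le> pi" using assms by (intro arccos_ubound) auto
  ultimately have "cos (7 * pi/6 - arccos y) \<le> cos (arccos x)"
    using assms arccos_lbound[of x] by (intro cos_monotone_0_pi_le) auto
  moreover have "cos (7 * pi/6) = - sqrt 3 / 2" "sin (7 * pi/6) = - 1/2"
    using cos_periodic_pi[of "pi/6"] sin_periodic_pi[of "pi/6"]
    by (simp_all add: cos_30 sin_30 add.commute)
  ultimately show ?thesis using assms by (simp add: cos_diff sin_arccos)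
qed

text \<open>Normalized coordinates of the path \<open>p u v q\<close>: \<open>u = (0, 0)\<close>, \<open>v = (d, 0)\<close>,
  \<open>p = a (cu, su)\<close> and \<open>q = (d - c cv, c sv)\<close>, with all three edge lengths at most 1.
  The angles at \<open>u\<close> and \<open>v\<close> are \<open>arccos cu\<close> and \<open>arccos cv\<close>; the exchange assumptions encode
  \<open>|pu|, |uv| \<le> |pv|\<close> and \<open>|uv|, |vq| \<le> |uq|\<close>.\<close>
locale normalized_path =
  fixes d a c cu su cv sv :: real
  assumes lengths: "0 < d" "d \<le> 1" "0 < a" "a \<le> 1" "0 < c" "c \<le> 1"
    and unit: "cu^2 + su^2 = 1" "cv^2 + sv^2 = 1"
    and sin_nonneg: "0 \<le> su" "0 \<le> sv"
    and exchange_u: "2 * a * cu \<le> d" "2 * d * cu \<le> a"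
    and exchange_v: "2 * c * cv \<le> d" "2 * d * cv \<le> c"
    and angle_sum: "arccos cu + arccos cv \<le> 7 * pi/6"
begin

lemma swap: "normalized_path d c a cv sv cu su"
  using lengths unit sin_nonneg exchange_u exchange_v angle_sum
  by unfold_locales (simp_all add: add.commute)

definition pq_sq :: "real \<Rightarrow> real \<Rightarrow> real \<Rightarrow> real" where
  "pq_sq d' a' c' = (d' - a' * cu - c' * cv)^2 + (a' * su - c' * sv)^2"

lemma pq_sq_eq:
  "pq_sq d' a' c'
    = d'^2 + a'^2 + c'^2 - 2 * d' * a' * cu - 2 * d' * c' * cv - 2 * a' * c' * (su * sv - cu * cv)"
proof -
  have "pq_sq d' a' c' = d'^2 + a'^2 * (cu^2 + su^2) + c'^2 * (cv^2 + sv^2)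
      - 2 * d' * a' * cu - 2 * d' * c' * cv - 2 * a' * c' * (su * sv - cu * cv)"
    unfolding pq_sq_def by (simp add: power2_eq_square algebra_simps)
  then show ?thesis using unit by simp
qed

lemma pq_sq_segment:
  assumes "l \<le> t" "t \<le> h"
    and "pq_sq (d0 + l * d1) (a0 + l * a1) (c0 + l * c1) \<le> K"
    and "pq_sq (d0 + h * d1) (a0 + h * a1) (c0 + h * c1) \<le> K"
  shows "pq_sq (d0 + t * d1) (a0 + t * a1) (c0 + t * c1) \<le> K"
proof -
  have affine: "pq_sq (d0 + s * d1) (a0 + s * a1) (c0 + s * c1)
      = ((d0 - a0 * cu - c0 * cv) + s * (d1 - a1 * cu - c1 * cv))^2
        + ((a0 * su - c0 * sv) + s * (a1 * su - c1 * sv))^2"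
    for s unfolding pq_sq_def by (simp add: algebra_simps)
  show ?thesis
    using assms sum_sq_affine_le_between[of l t h] unfolding affine by blast
qed

lemma pq_sq_between_d:
  "l \<le> t \<Longrightarrow> t \<le> h \<Longrightarrow> pq_sq l a' c' \<le> K \<Longrightarrow> pq_sq h a' c' \<le> K \<Longrightarrow> pq_sq t a' c' \<le> K"
  using pq_sq_segment[of l t h 0 1 a' 0 c' 0 K] by simp

lemma pq_sq_between_a:
  "l \<le> t \<Longrightarrow> t \<le> h \<Longrightarrow> pq_sq d' l c' \<le> K \<Longrightarrow> pq_sq d' h c' \<le> K \<Longrightarrow> pq_sq d' t c' \<le> K"
  using pq_sq_segment[of l t h d' 0 0 1 c' 0 K] by simp

lemma pq_sq_between_c:
  "l \<le> t \<Longrightarrow> t \<le> h \<Longrightarrow> pq_sq d' a' l \<le> K \<Longrightarrow> pq_sq d' a' h \<le> K \<Longrightarrow> pq_sq d' a' t \<le> K"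
  using pq_sq_segment[of l t h d' 0 a' 0 0 1 K] by simp

lemma unit_bounds: "-1 \<le> cu" "cu \<le> 1" "su \<le> 1" "-1 \<le> cv" "cv \<le> 1" "sv \<le> 1"
  using unit abs_square_le_1[of cu] abs_square_le_1[of su] abs_square_le_1[of cv] abs_square_le_1[of sv]
  by (smt (verit) zero_le_power2)+

lemma cos_le_half: "cu \<le> 1/2" "cv \<le> 1/2"
  using le_half_of_mutual_bounds lengths exchange_u exchange_v by auto

lemma angle_bound_u: "0 \<le> 2 * cu + sqrt 3 * cv + sv"
proof -
  have "sqrt (1 - cv^2) = sv" using unit(2) sin_nonneg(2) by (intro real_sqrt_unique) auto
  then show ?thesis
    using cos_bound_of_arccos_add_le[of cu cv] unit_bounds cos_le_half angle_sum by simp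
qed

lemma angle_bound_v: "0 \<le> 2 * cv + sqrt 3 * cu + su"
  using normalized_path.angle_bound_u[OF swap] .

lemma obtuse_obtuse:
  assumes "cu \<le> 0" "cv \<le> 0"
  shows "pq_sq d a c \<le> 3"
proof -
  have "sqrt 3 * cu \<le> 0" "sqrt 3 * cv \<le> 0" using assms by (simp_all add: mult_nonneg_nonpos)
  then have half: "-1/2 \<le> cu" "-1/2 \<le> cv" using angle_bound_u angle_bound_v unit_bounds by linarith+
  have "sqrt 3 / 2 \<le> su" using unit(1) sin_nonneg(1) half assms by (intro sqrt3_half_le_of_unit) auto
  have far_corner: "- cu - cv \<le> su * sv - cu * cv"
  proof -
    have "sqrt 3 / 2 * (- 2 * cu - sqrt 3 * cv) \<le> sqrt 3 / 2 * sv"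
      using angle_bound_u by (intro mult_left_mono) auto
    also have "\<dots> \<le> su * sv" using \<open>sqrt 3 / 2 \<le> su\<close> sin_nonneg by (intro mult_right_mono) auto
    finally have "- sqrt 3 * cu - 3/2 * cv \<le> su * sv" by (simp add: algebra_simps)
    moreover have "1 * (- cu) \<le> sqrt 3 * (- cu)" using assms sqrt3_bounds by (intro mult_right_mono) auto
    moreover have "(- cu) * (- cv) \<le> 1/2 * (- cv)" using assms half by (intro mult_right_mono) auto
    ultimately show ?thesis by simp
  qed
  have "a * cu \<le> 0" "c * cv \<le> 0" using assms lengths by (simp_all add: mult_nonneg_nonpos)
  then have "0 \<le> d - a * cu - c * cv" using lengths by linarith
  then have "pq_sq d a c \<le> pq_sq 1 a c" unfolding pq_sq_def using lengths by (simp add: power_mono)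
  also have "pq_sq 1 a c \<le> 3"
  proof -
    have corner: "pq_sq 1 a' c' \<le> 3" if "a' \<in> {0, 1}" "c' \<in> {0, 1}" for a' c'
      using that half far_corner by (auto simp: pq_sq_eq)
    have edge: "pq_sq 1 a' c \<le> 3" if "a' \<in> {0, 1}" for a'
      by (rule pq_sq_between_c[of 0 c 1]) (use lengths that corner in auto)
    show ?thesis by (rule pq_sq_between_a[of 0 a 1]) (use lengths edge in auto)
  qed
  finally show ?thesis .
qed

lemma acute_acute:
  assumes "0 \<le> cu" "0 \<le> cv"
  shows "pq_sq d a c \<le> 3"
proof -
  have "0 \<le> a * cu" "0 \<le> c * cv" using assms lengths by simp_all
  then have "(d - a * cu - c * cv)^2 \<le> 1"
    using exchange_u exchange_v lengths by (intro power_le_one) auto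
  moreover have "0 \<le> a * su" "a * su \<le> 1" "0 \<le> c * sv" "c * sv \<le> 1"
    using lengths sin_nonneg unit_bounds by (simp_all add: mult_le_one)
  then have "(a * su - c * sv)^2 \<le> 1" by (simp add: abs_square_le_1)
  ultimately show ?thesis unfolding pq_sq_def by simp
qed

lemma acute_obtuse:
  assumes "0 < cu" "cv \<le> 0"
  shows "pq_sq d a c \<le> 3"
proof -
  have "sqrt 3 / 2 \<le> su"
    using unit(1) sin_nonneg(1) cos_le_half(1) assms by (intro sqrt3_half_le_of_unit) auto
  have "1/2 \<le> sv"
  proof (rule ccontr)
    assume "\<not> 1/2 \<le> sv"
    then have "sv^2 < (1/2)^2" using sin_nonneg by (intro power_strict_mono) auto
    then have "3/4 < cv^2" using unit(2) by (simp add: power_divide)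
    then have "(sqrt 3 / 2)^2 < (- cv)^2" by (simp add: power_divide)
    then have "sqrt 3 / 2 < - cv" by (rule power2_less_imp_less) (use assms in simp)
    then have "sqrt 3 * (sqrt 3 / 2) < sqrt 3 * (- cv)" by (intro mult_strict_left_mono) auto
    then show False using angle_bound_u cos_le_half \<open>\<not> 1/2 \<le> sv\<close> by simp
  qed
  define C where "C = su * sv - cu * cv"
  have "sqrt 3 / 2 * (1/2) \<le> su * sv"
    using \<open>sqrt 3 / 2 \<le> su\<close> \<open>1/2 \<le> sv\<close> sin_nonneg by (intro mult_mono) auto
  moreover have "cu * cv \<le> 0" using assms by (simp add: mult_nonneg_nonpos)
  ultimately have C_ge: "sqrt 3 / 4 \<le> C" unfolding C_def by simp
  have far_corner: "- cu - cv \<le> C"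
  proof -
    have "sqrt 3 * cu \<le> 2 * cu" using assms sqrt3_bounds by (intro mult_right_mono) auto
    moreover have "su * 1 \<le> su * (2 * sv)" using sin_nonneg \<open>1/2 \<le> sv\<close> by (intro mult_left_mono) auto
    ultimately show ?thesis using angle_bound_v \<open>cu * cv \<le> 0\<close> unfolding C_def by simp
  qed
  have slant_corner: "- 2 * cv - 4 * cu * C \<le> 1"
  proof -
    have "4 * cu * (sqrt 3 / 4) \<le> 4 * cu * C" using assms C_ge by (intro mult_left_mono) auto
    then show ?thesis using angle_bound_v unit_bounds by (simp add: algebra_simps)
  qed
  have "0 \<le> C" using C_ge sqrt3_bounds by linarith
  have on_a1: "pq_sq d' 1 1 \<le> 3" if "0 \<le> d'" "d' \<le> 1" for d'
    by (rule pq_sq_between_d[OF that]) (use far_corner \<open>0 \<le> C\<close> in \<open>simp_all add: pq_sq_eq C_def\<close>)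
  have on_slant: "pq_sq d' (2 * d' * cu) 1 \<le> 3" if "0 \<le> d'" "d' \<le> 1" for d'
  proof -
    have "pq_sq 1 (2 * cu) 1 = 2 - 2 * cv - 4 * cu * C"
      unfolding pq_sq_eq C_def by (simp add: power2_eq_square algebra_simps)
    then have "pq_sq 1 (2 * cu) 1 \<le> 3" using slant_corner by simp
    moreover have "pq_sq 0 0 1 \<le> 3" by (simp add: pq_sq_eq)
    ultimately show ?thesis using pq_sq_segment[of 0 d' 1 0 1 0 "2 * cu" 1 0 3] that by (simp add: ac_simps)
  qed
  have "pq_sq d a 0 \<le> 3"
  proof -
    have "d^2 \<le> 1" "a^2 \<le> 1" using lengths by (simp_all add: power_le_one)
    moreover have "0 \<le> d * a * cu" using lengths assms by simp
    ultimately show ?thesis by (simp add: pq_sq_eq)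
  qed
  moreover have "pq_sq d a 1 \<le> 3"
    by (rule pq_sq_between_a[of "2 * d * cu" a 1]) (use exchange_u lengths on_a1 on_slant in auto)
  ultimately show ?thesis by (intro pq_sq_between_c[of 0 c 1]) (use lengths in auto)
qed

theorem dist_sq_le_3: "(d - a * cu - c * cv)^2 + (a * su - c * sv)^2 \<le> 3"
proof -
  consider "cu \<le> 0" "cv \<le> 0" | "0 \<le> cu" "0 \<le> cv" | "0 < cu" "cv \<le> 0" | "cu \<le> 0" "0 < cv"
    by linarith
  then have "pq_sq d a c \<le> 3"
  proof cases
    case 4
    then have "normalized_path.pq_sq cv sv cu su d c a \<le> 3"
      by (intro normalized_path.acute_obtuse[OF swap])
    then show ?thesis
      by (simp add: pq_sq_def normalized_path.pq_sq_def[OF swap] power2_commute algebra_simps)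
  qed (use obtuse_obtuse acute_acute acute_obtuse in auto)
  then show ?thesis by (simp add: pq_sq_def)
qed

end


lemma normalized_path_scaled:
  assumes "0 < M" and "normalized_path (d / M) (a / M) (c / M) cu su cv sv"
  shows "(d - a * cu - c * cv)^2 + (a * su - c * sv)^2 \<le> 3 * M^2"
proof -
  have "((d - a * cu - c * cv) / M)^2 + ((a * su - c * sv) / M)^2 \<le> 3"
    using normalized_path.dist_sq_le_3[OF assms(2)] by (simp add: diff_divide_distrib)
  then show ?thesis using assms(1) by (simp add: power_divide field_simps)
qed

lemma inner_pt: "x \<bullet> y = x$1 * y$1 + x$2 * y$2" for x y :: pt
  by (simp add: inner_vec_def sum_2)

lemma inner_sq_add_cross2_sq: "(e \<bullet> x)^2 + (cross2 e x)^2 = (norm e * norm x)^2" for e x :: pt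
proof -
  have "(norm e * norm x)^2 = (e \<bullet> e) * (x \<bullet> x)" by (simp add: power_mult_distrib power2_norm_eq_inner)
  then show ?thesis by (simp add: inner_pt cross2_def power2_eq_square algebra_simps)
qed

lemma norm_sq_frame:
  fixes e z :: pt
  assumes "e \<noteq> 0"
  shows "(norm z)^2 = (e \<bullet> z / norm e)^2 + (cross2 e z / norm e)^2"
  using inner_sq_add_cross2_sq[of e z] assms by (simp add: power_divide power_mult_distrib field_simps)

lemma inner_cross2_unit:
  fixes e x :: pt
  assumes "e \<noteq> 0" "x \<noteq> 0"
  shows "(e \<bullet> x / (norm e * norm x))^2 + (\<bar>cross2 e x\<bar> / (norm e * norm x))^2 = 1"
  using inner_sq_add_cross2_sq[of e x] assms by (simp add: power_divide add_divide_distrib[symmetric])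

lemma norm_sq_frame_same_side:
  fixes e x y :: pt
  assumes "e \<noteq> 0" and "0 \<le> cross2 e x * cross2 e y"
  shows "(norm (e + y - x))^2 = (norm e - e \<bullet> x / norm e + e \<bullet> y / norm e)^2
    + (\<bar>cross2 e x\<bar> / norm e - \<bar>cross2 e y\<bar> / norm e)^2"
proof -
  have "e \<bullet> (e + y - x) / norm e = norm e - e \<bullet> x / norm e + e \<bullet> y / norm e"
    using assms(1) by (simp add: inner_diff_right inner_add_right power2_norm_eq_inner[symmetric]
        field_simps power2_eq_square)
  moreover have "cross2 e (e + y - x) = cross2 e y - cross2 e x" by (simp add: cross2_def algebra_simps)
  moreover have "(cross2 e y / norm e - cross2 e x / norm e)^2
      = (\<bar>cross2 e x\<bar> / norm e - \<bar>cross2 e y\<bar> / norm e)^2"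
  proof -
    have "(cross2 e y - cross2 e x)^2 = (\<bar>cross2 e x\<bar> - \<bar>cross2 e y\<bar>)^2"
      using assms(2) by (simp add: power2_eq_square abs_mult[symmetric] algebra_simps)
    then show ?thesis by (simp add: diff_divide_distrib[symmetric] power_divide)
  qed
  ultimately show ?thesis
    using norm_sq_frame[OF assms(1), of "e + y - x"] by (simp add: power_divide diff_divide_distrib)
qed

lemma norm_le_norm_diff_imp:
  fixes x e :: "'a::real_inner"
  assumes "norm x \<le> norm (x - e)" and "x \<bullet> e = norm e * r" and "e \<noteq> 0"
  shows "2 * r \<le> norm e"
proof -
  have "2 * (x \<bullet> e) \<le> (norm e)^2"
    using assms(1) by (simp add: norm_le inner_diff power2_norm_eq_inner inner_commute)
  then have "norm e * (2 * r) \<le> norm e * norm e"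
    using assms(2) by (simp add: power2_eq_square algebra_simps)
  then show ?thesis using assms(3) by simp
qed

lemma norm_path_le_sqrt3:
  fixes e x y :: pt
  assumes cross: "0 < cross2 e x * cross2 e y"
    and exchange: "norm x \<le> norm (x - e)" "norm e \<le> norm (x - e)"
      "norm e \<le> norm (e + y)" "norm y \<le> norm (e + y)"
    and angles: "arccos (e \<bullet> x / (norm e * norm x)) + arccos (- (e \<bullet> y) / (norm e * norm y))
      \<le> 7 * pi / 6"
    and "norm e \<le> M" "norm x \<le> M" "norm y \<le> M"
  shows "norm (e + y - x) \<le> sqrt 3 * M"
proof -
  define d a c where "d = norm e" and "a = norm x" and "c = norm y"
  have "e \<noteq> 0" "x \<noteq> 0" "y \<noteq> 0" using cross by (auto simp: cross2_def)
  then have pos: "0 < d" "0 < a" "0 < c" by (simp_all add: d_def a_def c_def)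
  then have "0 < M" using \<open>norm e \<le> M\<close> unfolding d_def by linarith
  define cu su cv sv where "cu = e \<bullet> x / (d * a)" and "su = \<bar>cross2 e x\<bar> / (d * a)"
    and "cv = - (e \<bullet> y) / (d * c)" and "sv = \<bar>cross2 e y\<bar> / (d * c)"
  have polar: "e \<bullet> x = d * a * cu" "e \<bullet> y = - (d * c * cv)"
      "\<bar>cross2 e x\<bar> = d * a * su" "\<bar>cross2 e y\<bar> = d * c * sv"
    using pos by (simp_all add: cu_def su_def cv_def sv_def)
  have "normalized_path (d / M) (a / M) (c / M) cu su cv sv"
  proof
    show "cu^2 + su^2 = 1" "cv^2 + sv^2 = 1"
      using inner_cross2_unit[of e x] inner_cross2_unit[of e y] \<open>e \<noteq> 0\<close> \<open>x \<noteq> 0\<close> \<open>y \<noteq> 0\<close>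
      by (simp_all add: cu_def su_def cv_def sv_def d_def a_def c_def)
    show "0 \<le> su" "0 \<le> sv" using pos by (simp_all add: su_def sv_def)
    show "arccos cu + arccos cv \<le> 7 * pi / 6"
      using angles by (simp add: cu_def cv_def d_def a_def c_def)
    have "2 * (a * cu) \<le> d" "2 * (d * cu) \<le> a" "2 * (d * cv) \<le> c" "2 * (c * cv) \<le> d"
      using norm_le_norm_diff_imp[of x e "a * cu"] norm_le_norm_diff_imp[of e x "d * cu"]
        norm_le_norm_diff_imp[of e "- y" "d * cv"] norm_le_norm_diff_imp[of y "- e" "c * cv"]
        exchange polar \<open>e \<noteq> 0\<close> \<open>x \<noteq> 0\<close> \<open>y \<noteq> 0\<close>
      by (simp_all add: d_def a_def c_def norm_minus_commute inner_commute algebra_simps)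
    then show "2 * (a / M) * cu \<le> d / M" "2 * (d / M) * cu \<le> a / M"
        "2 * (c / M) * cv \<le> d / M" "2 * (d / M) * cv \<le> c / M"
      using \<open>0 < M\<close> by (simp_all add: field_simps)
    show "0 < d / M" "d / M \<le> 1" "0 < a / M" "a / M \<le> 1" "0 < c / M" "c / M \<le> 1"
      using pos \<open>0 < M\<close> assms(7-9) by (simp_all add: d_def a_def c_def)
  qed
  then have "(d - a * cu - c * cv)^2 + (a * su - c * sv)^2 \<le> 3 * M^2"
    using \<open>0 < M\<close> by (intro normalized_path_scaled)
  moreover have "(norm (e + y - x))^2 = (d - a * cu - c * cv)^2 + (a * su - c * sv)^2"
    using norm_sq_frame_same_side[of e x y] \<open>e \<noteq> 0\<close> cross pos
    by (simp add: polar d_def[symmetric])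
  ultimately have "(norm (e + y - x))^2 \<le> (sqrt 3 * M)^2" by (simp add: power_mult_distrib)
  then show ?thesis by (rule power2_le_imp_le) (use \<open>0 < M\<close> in simp)
qed

lemma dist_le_sqrt3_max:
  fixes p u v q :: pt
  assumes "same_side u v p q"
    and "dist p u \<le> dist p v" "dist u v \<le> dist p v" "dist u v \<le> dist u q" "dist v q \<le> dist u q"
    and "angle_deg p u v + angle_deg u v q \<le> 210"
  shows "dist p q \<le> sqrt 3 * Max {dist p u, dist u v, dist v q}"
proof -
  define e x y where "e = v - u" and "x = p - u" and "y = q - v"
  have dists: "dist u v = norm e" "dist p u = norm x" "dist v q = norm y" "dist p v = norm (x - e)"
      "dist u q = norm (e + y)" "dist p q = norm (e + y - x)"
    by (simp_all add: e_def x_def y_def dist_norm norm_minus_commute algebra_simps)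
  have "u - v = - e" by (simp add: e_def)
  then have "angle_deg p u v + angle_deg u v q
      = (arccos (e \<bullet> x / (norm e * norm x)) + arccos (- (e \<bullet> y) / (norm e * norm y))) * 180 / pi"
    unfolding angle_deg_def x_def[symmetric] e_def[symmetric] y_def[symmetric]
    by (simp add: inner_commute mult.commute add_divide_distrib)
  then have "arccos (e \<bullet> x / (norm e * norm x)) + arccos (- (e \<bullet> y) / (norm e * norm y))
      \<le> 7 * pi / 6"
    using assms(6) by (simp add: pos_divide_le_eq)
  moreover have "0 < cross2 e x * cross2 e y"
    using assms(1) by (simp add: same_side_def e_def x_def y_def cross2_def algebra_simps)
  ultimately have "norm (e + y - x) \<le> sqrt 3 * Max {dist p u, dist u v, dist v q}"
    using assms(2-5) unfolding dists by (intro norm_path_le_sqrt3) simp_all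
  then show ?thesis by (simp add: dists)
qed

theorem theorem2:
  fixes T :: "pt set set" and S :: "pt set" and p u v q :: pt
  assumes "finite S"
    and "is_EMST S T"
    and "{p, u} \<in> T" and "{u, v} \<in> T" and "{v, q} \<in> T"
    and "same_side u v p q"
    and "angle_deg p u v + angle_deg u v q \<le> 210"
  shows "dist p q \<le> sqrt 3 * Max {dist p u, dist u v, dist v q}"
proof -
  have "p \<noteq> v" "u \<noteq> q" using assms(6) by (auto simp: same_side_def cross2_def)
  have "{u, p} \<in> T" "{v, u} \<in> T" "{q, v} \<in> T" using assms(3-5) by (simp_all add: insert_commute)
  have "dist p u \<le> dist p v" by (rule is_EMST_adjacent_edge_le[OF assms(1-4) \<open>p \<noteq> v\<close>])
  moreover have "dist u v \<le> dist p v"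
    using is_EMST_adjacent_edge_le[OF assms(1,2) \<open>{v, u} \<in> T\<close> \<open>{u, p} \<in> T\<close>] \<open>p \<noteq> v\<close>
    by (metis dist_commute)
  moreover have "dist u v \<le> dist u q" by (rule is_EMST_adjacent_edge_le[OF assms(1,2,4,5) \<open>u \<noteq> q\<close>])
  moreover have "dist v q \<le> dist u q"
    using is_EMST_adjacent_edge_le[OF assms(1,2) \<open>{q, v} \<in> T\<close> \<open>{v, u} \<in> T\<close>] \<open>u \<noteq> q\<close>
    by (metis dist_commute)
  ultimately show ?thesis using dist_le_sqrt3_max assms(6,7) by blast
qed

end
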